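(* Let $G$ be a graph, let $S$ be a minimal separator of $G$, let $\mu$ be a probability measure on $S$, and let $\alpha<1$ be a constant such that $\mu(N(v))<\alpha$ for every $v\in V(G)$. Let $A$ and $B$ be two full components of $G\setminus S$. If two vertices $x,y\in S$ are chosen independently at random according to $\mu$, then the probability that $(x,y)$ is not lucky with respect to $A$ is less than $6\alpha$ (and likewise with respect to $B$).
   Context: All graphs are finite, simple and undirected. $N(v)$ is the open neighbourhood of $v$ and $\mu(N(v))$ means $\mu(N(v)\cap S)$. For distinct $s,t\in V(G)$, $S$ is an $s$-$t$ separator if $s,t$ lie in different components of $G\setminus S$, minimal if no proper subset is an $s$-$t$ separator; $S$ is a minimal separator of $G$ if it is a minimal $s$-$t$ separator for some $s,t$. A component $C$ of $G\setminus S$ is full if every vertex of $S$ has a neighbour in $C$. A vertex $x\in S$ is lucky with respect to $A$ if there is an induced path on four vertices in $G$ with one endpoint $x$ and the remaining three vertices in $A$. A pair $(x,y)\in S\times S$ is lucky with respect to $A$ if $x$ is lucky with respect to $A$, or there exists an induced path on four vertices in $G$ with endpoints $x$ and $y$ and its two middle vertices in $A$. *)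

theory Defs
  imports Complex_Main
begin

definition simple_graph :: "'a set \<Rightarrow> ('a \<Rightarrow> 'a \<Rightarrow> bool) \<Rightarrow> bool" where
  "simple_graph V E \<longleftrightarrow> finite V \<and> (\<forall>u v. E u v \<longrightarrow> u \<in> V \<and> v \<in> V)
     \<and> (\<forall>u v. E u v \<longrightarrow> E v u) \<and> (\<forall>v. \<not> E v v)"

definition nbhd :: "'a set \<Rightarrow> ('a \<Rightarrow> 'a \<Rightarrow> bool) \<Rightarrow> 'a \<Rightarrow> 'a set" where
  "nbhd V E v = {u \<in> V. E v u}"

definition conn_in :: "('a \<Rightarrow> 'a \<Rightarrow> bool) \<Rightarrow> 'a set \<Rightarrow> 'a \<Rightarrow> 'a \<Rightarrow> bool" where
  "conn_in E X u v \<longleftrightarrow> u \<in> X \<and> v \<in> X \<and> (\<lambda>a b. E a b \<and> a \<in> X \<and> b \<in> X)\<^sup>*\<^sup>* u v"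

definition component_of :: "'a set \<Rightarrow> ('a \<Rightarrow> 'a \<Rightarrow> bool) \<Rightarrow> 'a set \<Rightarrow> 'a set \<Rightarrow> bool" where
  "component_of V E S C \<longleftrightarrow> (\<exists>u \<in> V - S. C = {v. conn_in E (V - S) u v})"

definition full_component :: "'a set \<Rightarrow> ('a \<Rightarrow> 'a \<Rightarrow> bool) \<Rightarrow> 'a set \<Rightarrow> 'a set \<Rightarrow> bool" where
  "full_component V E S C \<longleftrightarrow> component_of V E S C \<and> (\<forall>x \<in> S. \<exists>c \<in> C. E x c)"

definition st_separator :: "'a set \<Rightarrow> ('a \<Rightarrow> 'a \<Rightarrow> bool) \<Rightarrow> 'a \<Rightarrow> 'a \<Rightarrow> 'a set \<Rightarrow> bool" where
  "st_separator V E s t S \<longleftrightarrow> S \<subseteq> V \<and> s \<in> V - S \<and> t \<in> V - S \<and> s \<noteq> t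
     \<and> \<not> conn_in E (V - S) s t"

definition minimal_st_separator :: "'a set \<Rightarrow> ('a \<Rightarrow> 'a \<Rightarrow> bool) \<Rightarrow> 'a \<Rightarrow> 'a \<Rightarrow> 'a set \<Rightarrow> bool" where
  "minimal_st_separator V E s t S \<longleftrightarrow> st_separator V E s t S
     \<and> (\<forall>T. T \<subset> S \<longrightarrow> \<not> st_separator V E s t T)"

definition minimal_separator :: "'a set \<Rightarrow> ('a \<Rightarrow> 'a \<Rightarrow> bool) \<Rightarrow> 'a set \<Rightarrow> bool" where
  "minimal_separator V E S \<longleftrightarrow> (\<exists>s t. minimal_st_separator V E s t S)"

definition induced_P4 :: "('a \<Rightarrow> 'a \<Rightarrow> bool) \<Rightarrow> 'a \<Rightarrow> 'a \<Rightarrow> 'a \<Rightarrow> 'a \<Rightarrow> bool" where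
  "induced_P4 E a b c d \<longleftrightarrow> distinct [a, b, c, d] \<and> E a b \<and> E b c \<and> E c d
     \<and> \<not> E a c \<and> \<not> E b d \<and> \<not> E a d"

definition lucky_vertex :: "('a \<Rightarrow> 'a \<Rightarrow> bool) \<Rightarrow> 'a set \<Rightarrow> 'a \<Rightarrow> bool" where
  "lucky_vertex E A x \<longleftrightarrow> (\<exists>b \<in> A. \<exists>c \<in> A. \<exists>d \<in> A. induced_P4 E x b c d)"

definition lucky_pair :: "('a \<Rightarrow> 'a \<Rightarrow> bool) \<Rightarrow> 'a set \<Rightarrow> 'a \<Rightarrow> 'a \<Rightarrow> bool" where
  "lucky_pair E A x y \<longleftrightarrow> lucky_vertex E A x \<or> (\<exists>b \<in> A. \<exists>c \<in> A. induced_P4 E x b c y)"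

definition prob_weights :: "'a set \<Rightarrow> ('a \<Rightarrow> real) \<Rightarrow> bool" where
  "prob_weights S w \<longleftrightarrow> (\<forall>x \<in> S. 0 \<le> w x) \<and> sum w S = 1"

end

theory Submission
  imports Defs
begin

text \<open>
  Fix a root \<open>u\<close> of the full component \<open>A\<close>, let \<open>depth\<close> be the distance from \<open>u\<close> inside \<open>A\<close>,
  and for \<open>x \<in> S\<close> let \<open>nearest x\<close> be a neighbour of \<open>x\<close> in \<open>A\<close> of least depth.
  If \<open>(x, y)\<close> is not lucky, then \<open>x \<sim> u\<close>, \<open>x \<sim> y\<close>, \<open>nearest x \<sim> y\<close> or \<open>nearest y \<sim> x\<close>.
  Otherwise \<open>a = nearest x\<close> has depth 1 (a deeper \<open>a\<close> would start an induced \<open>P\<^sub>4\<close>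
  descending a geodesic), \<open>x\<close> has no neighbour on a geodesic from \<open>u\<close> to \<open>c = nearest y\<close>
  (look at the last one), and adjacency to \<open>a\<close> then propagates from \<open>u\<close> along that geodesic
  up to \<open>c\<close>, so that \<open>x - a - c - y\<close> is an induced \<open>P\<^sub>4\<close>. Each of the four events has
  probability at most \<open>\<alpha>\<close>, which gives even the bound \<open>4\<alpha>\<close>.
\<close>

definition pair_prob :: "'a set \<Rightarrow> ('a \<Rightarrow> real) \<Rightarrow> ('a \<Rightarrow> 'a \<Rightarrow> bool) \<Rightarrow> real" where
  "pair_prob S w P = (\<Sum>(x, y) \<in> {(x, y) \<in> S \<times> S. P x y}. w x * w y)"

lemma prob_weights_finite: "prob_weights S w \<Longrightarrow> finite S"
  unfolding prob_weights_def by (metis sum.infinite zero_neq_one)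

lemma pair_prob_eq_sum_sections:
  assumes "finite S"
  shows "pair_prob S w P = (\<Sum>x\<in>S. w x * sum w {y \<in> S. P x y})"
proof -
  have "{(x, y) \<in> S \<times> S. P x y} = (SIGMA x:S. {y \<in> S. P x y})" by auto
  then have "pair_prob S w P = (\<Sum>x\<in>S. \<Sum>y\<in>{y \<in> S. P x y}. w x * w y)"
    unfolding pair_prob_def using assms by (simp add: sum.Sigma)
  then show ?thesis by (simp add: sum_distrib_left)
qed

lemma pair_prob_le_if_sections_le:
  assumes w: "prob_weights S w" and sections: "\<And>x. x \<in> S \<Longrightarrow> sum w {y \<in> S. P x y} \<le> c"
  shows "pair_prob S w P \<le> c"
proof -
  have "pair_prob S w P = (\<Sum>x\<in>S. w x * sum w {y \<in> S. P x y})"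
    using pair_prob_eq_sum_sections prob_weights_finite[OF w] by blast
  also have "\<dots> \<le> (\<Sum>x\<in>S. w x * c)"
    using w sections unfolding prob_weights_def by (auto intro: sum_mono mult_left_mono)
  also have "\<dots> = c"
    using w unfolding prob_weights_def by (simp add: sum_distrib_right[symmetric])
  finally show ?thesis .
qed

lemma pair_prob_swap: "pair_prob S w (\<lambda>x y. P y x) = pair_prob S w P"
  unfolding pair_prob_def
  by (rule sum.reindex_bij_witness[where i = prod.swap and j = prod.swap]) auto

lemma pair_prob_mono:
  assumes "prob_weights S w" and "\<And>x y. x \<in> S \<Longrightarrow> y \<in> S \<Longrightarrow> P x y \<Longrightarrow> Q x y"
  shows "pair_prob S w P \<le> pair_prob S w Q"
proof -
  have "finite {(x, y) \<in> S \<times> S. Q x y}"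
    using prob_weights_finite[OF assms(1)] by (auto intro: finite_subset[of _ "S \<times> S"])
  then show ?thesis
    unfolding pair_prob_def using assms unfolding prob_weights_def by (intro sum_mono2) auto
qed

lemma pair_prob_disj_le:
  assumes w: "prob_weights S w"
  shows "pair_prob S w (\<lambda>x y. P x y \<or> Q x y) \<le> pair_prob S w P + pair_prob S w Q"
proof -
  let ?g = "\<lambda>(x, y). w x * w y" and ?P = "{(x, y) \<in> S \<times> S. P x y}" and ?Q = "{(x, y) \<in> S \<times> S. Q x y}"
  have fin: "finite ?P" "finite ?Q"
    using prob_weights_finite[OF w] by (auto intro: finite_subset[of _ "S \<times> S"])
  have "0 \<le> sum ?g (?P \<inter> ?Q)"
    using w unfolding prob_weights_def by (intro sum_nonneg) auto
  moreover have "{(x, y) \<in> S \<times> S. P x y \<or> Q x y} = ?P \<union> ?Q" by auto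
  ultimately show ?thesis
    unfolding pair_prob_def using sum_Un[OF fin, of ?g] by simp
qed

locale rooted_full_component =
  fixes V :: "'a set" and E :: "'a \<Rightarrow> 'a \<Rightarrow> bool" and S A :: "'a set" and u :: 'a
  assumes simple: "simple_graph V E"
    and root: "u \<in> V - S"
    and component: "A = {v. conn_in E (V - S) u v}"
    and full: "\<forall>x \<in> S. \<exists>a \<in> A. E x a"
begin

abbreviation step :: "'a \<Rightarrow> 'a \<Rightarrow> bool" where
  "step a b \<equiv> E a b \<and> a \<in> V - S \<and> b \<in> V - S"

lemma adj_sym: "E a b \<Longrightarrow> E b a"
  and adj_irrefl: "\<not> E a a"
  and adj_in_V: "E a b \<Longrightarrow> a \<in> V"
  using simple unfolding simple_graph_def by blast+

lemma mem_A_iff: "a \<in> A \<longleftrightarrow> step\<^sup>*\<^sup>* u a"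
proof -
  have "step\<^sup>*\<^sup>* u a \<Longrightarrow> a \<in> V - S"
    by (induction rule: rtranclp_induct) (use root in auto)
  then show ?thesis
    unfolding component conn_in_def using root by auto
qed

lemma A_subset: "A \<subseteq> V - S"
  unfolding component conn_in_def by blast

definition depth :: "'a \<Rightarrow> nat" where
  "depth a = (LEAST n. (step ^^ n) u a)"

lemma depth_le: "(step ^^ n) u a \<Longrightarrow> depth a \<le> n"
  unfolding depth_def by (rule Least_le)

lemma depth_path: "a \<in> A \<Longrightarrow> (step ^^ depth a) u a"
  unfolding depth_def mem_A_iff rtranclp_power by (elim exE LeastI)

lemma depth_adj_le:
  assumes "a \<in> A" "b \<in> A" "E a b"
  shows "depth b \<le> Suc (depth a)"
proof -
  have "(step ^^ Suc (depth a)) u b"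
    using depth_path[OF assms(1)] assms A_subset by auto
  then show ?thesis by (rule depth_le)
qed

lemma not_adj_if_depth_gap:
  assumes "a \<in> A" "b \<in> A" "depth a + 2 \<le> depth b"
  shows "\<not> E a b" "\<not> E b a"
  using depth_adj_le[OF assms(1,2)] adj_sym assms(3) by fastforce+

lemma depth_eq_0_iff: "a \<in> A \<Longrightarrow> depth a = 0 \<longleftrightarrow> a = u"
  using depth_path[of a] depth_le[of 0 u] by auto

definition geodesic :: "(nat \<Rightarrow> 'a) \<Rightarrow> nat \<Rightarrow> bool" where
  "geodesic v k \<longleftrightarrow> v 0 = u \<and> (\<forall>i<k. E (v i) (v (Suc i))) \<and> (\<forall>i\<le>k. v i \<in> A \<and> depth (v i) = i)"

lemma geodesic_to:
  assumes a: "a \<in> A"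
  obtains v where "geodesic v (depth a)" "v (depth a) = a"
proof -
  let ?k = "depth a"
  obtain v where v0: "v 0 = u" and vk: "v ?k = a" and steps: "\<forall>i<?k. step (v i) (v (Suc i))"
    using depth_path[OF a] unfolding relpowp_fun_conv by blast
  have prefix: "(step ^^ i) u (v i)" if "i \<le> ?k" for i
    unfolding relpowp_fun_conv using that v0 steps by (intro exI[of _ v]) auto
  have in_A: "v i \<in> A" if "i \<le> ?k" for i
    using prefix[OF that] unfolding mem_A_iff by (rule relpowp_imp_rtranclp)
  have suffix: "?k \<le> depth (v i) + (?k - i)" if "i \<le> ?k" for i
    using that
  proof (induction rule: inc_induct)
    case (step i)
    then show ?case
      using depth_adj_le[OF in_A in_A, of i "Suc i"] steps by fastforce
  qed (simp add: vk)
  have "depth (v i) = i" if "i \<le> ?k" for i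
    using depth_le[OF prefix[OF that]] suffix[OF that] that by linarith
  then show ?thesis
    using that v0 vk steps in_A unfolding geodesic_def by blast
qed

definition nearest :: "'a \<Rightarrow> 'a" where
  "nearest x = (ARG_MIN depth a. a \<in> A \<and> E x a)"

lemma nearest_in_A: "x \<in> S \<Longrightarrow> nearest x \<in> A"
  and adj_nearest: "x \<in> S \<Longrightarrow> E x (nearest x)"
  using full arg_min_natI[of "\<lambda>a. a \<in> A \<and> E x a" _ depth]
  unfolding nearest_def by blast+

lemma depth_nearest_le: "a \<in> A \<Longrightarrow> E x a \<Longrightarrow> depth (nearest x) \<le> depth a"
  unfolding nearest_def using arg_min_nat_lemma[of "\<lambda>a. a \<in> A \<and> E x a"] by blast

lemma lucky_vertexI: "b \<in> A \<Longrightarrow> c \<in> A \<Longrightarrow> d \<in> A \<Longrightarrow> induced_P4 E x b c d \<Longrightarrow> lucky_vertex E A x"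
  unfolding lucky_vertex_def by blast

lemma depth_nearest_le_1:
  assumes x: "x \<in> S" and not_lucky: "\<not> lucky_vertex E A x"
  shows "depth (nearest x) \<le> 1"
proof (rule ccontr)
  let ?a = "nearest x"
  assume "\<not> ?thesis"
  then have "2 \<le> depth ?a" by simp
  then obtain k where k: "depth ?a = Suc (Suc k)" by (metis add_2_eq_Suc le_Suc_ex)
  obtain v where v: "geodesic v (Suc (Suc k))" "v (Suc (Suc k)) = ?a"
    using geodesic_to[OF nearest_in_A[OF x]] unfolding k .
  have in_A: "v k \<in> A" "v (Suc k) \<in> A" and depths: "depth (v k) = k" "depth (v (Suc k)) = Suc k"
    and edges: "E (v k) (v (Suc k))" "E (v (Suc k)) ?a"
    using v unfolding geodesic_def by auto
  have "\<not> E x (v k)" "\<not> E x (v (Suc k))"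
    using depth_nearest_le[OF in_A(1), of x] depth_nearest_le[OF in_A(2), of x] k depths by auto
  moreover have "\<not> E ?a (v k)"
    using not_adj_if_depth_gap[OF in_A(1) nearest_in_A[OF x]] depths k by simp
  moreover have "x \<notin> A" using x A_subset by blast
  ultimately have "induced_P4 E x ?a (v (Suc k)) (v k)"
    unfolding induced_P4_def
    using adj_nearest[OF x] adj_sym[OF edges(1)] adj_sym[OF edges(2)] nearest_in_A[OF x] in_A
      depths k
    by auto
  then show False
    using not_lucky lucky_vertexI[OF nearest_in_A[OF x] in_A(2,1)] by blast
qed

lemma root_adj_nearest:
  assumes "x \<in> S" "\<not> lucky_vertex E A x" "\<not> E x u"
  shows "E u (nearest x)"
proof -
  have "depth (nearest x) \<noteq> 0"
    using depth_eq_0_iff[OF nearest_in_A] adj_nearest assms by metis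
  then have "depth (nearest x) = 1"
    using depth_nearest_le_1 assms by fastforce
  then obtain v where "geodesic v 1" "v 1 = nearest x"
    using geodesic_to[OF nearest_in_A[OF assms(1)]] by metis
  then show ?thesis unfolding geodesic_def by auto
qed

text \<open>At the first index where adjacency to \<open>a\<close> fails, \<open>x - a - v\<^sub>i - v\<^sub>i\<^sub>+\<^sub>1\<close> would be
  an induced \<open>P\<^sub>4\<close>.\<close>
lemma adj_propagates:
  assumes not_lucky: "\<not> lucky_vertex E A x" and x: "x \<notin> A"
    and a: "a \<in> A" "E x a" "E a (v 0)"
    and path: "\<And>i. i < k \<Longrightarrow> E (v i) (v (Suc i))" "\<And>i. i \<le> k \<Longrightarrow> v i \<in> A"
    and avoids: "\<And>i. i \<le> k \<Longrightarrow> \<not> E x (v i)"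
  shows "E a (v k)"
proof -
  have "i \<le> k \<Longrightarrow> E a (v i)" for i
  proof (induction i)
    case (Suc i)
    show ?case
    proof (rule ccontr)
      assume "\<not> E a (v (Suc i))"
      then have "induced_P4 E x a (v i) (v (Suc i))"
        unfolding induced_P4_def
        using Suc path[of i] path(2)[of "Suc i"] avoids[of i] avoids[of "Suc i"] a x adj_irrefl
        by (auto dest: adj_sym)
      then show False
        using not_lucky lucky_vertexI a path(2) Suc by (metis Suc_leD)
    qed
  qed (use a in simp)
  then show ?thesis by simp
qed

lemma not_adj_geodesic_to_nearest:
  assumes x: "x \<in> S" and y: "y \<in> S" and not_lucky: "\<not> lucky_pair E A x y"
    and xy: "\<not> E x y" and x_c: "\<not> E x (nearest y)"
    and v: "geodesic v (depth (nearest y))" "v (depth (nearest y)) = nearest y"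
    and i: "i \<le> depth (nearest y)"
  shows "\<not> E x (v i)"
proof
  let ?k = "depth (nearest y)" and ?c = "nearest y"
  assume "E x (v i)"
  let ?J = "{i. i \<le> ?k \<and> E x (v i)}"
  have fin: "finite ?J" by (rule finite_subset[of _ "{..?k}"]) auto
  define j where "j = Max ?J"
  have "j \<in> ?J"
    unfolding j_def using fin \<open>E x (v i)\<close> i by (intro Max_in) auto
  then have j: "j \<le> ?k" "E x (v j)" by simp_all
  have j_max: "\<And>i. i \<le> ?k \<Longrightarrow> E x (v i) \<Longrightarrow> i \<le> j"
    using Max_ge[OF fin] unfolding j_def by blast
  have in_A: "\<And>i. i \<le> ?k \<Longrightarrow> v i \<in> A" and depths: "\<And>i. i \<le> ?k \<Longrightarrow> depth (v i) = i"
    and edges: "\<And>i. i < ?k \<Longrightarrow> E (v i) (v (Suc i))"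
    using v(1) unfolding geodesic_def by auto
  have "x \<notin> A" "y \<notin> A" using x y A_subset by auto
  have "j \<noteq> ?k" using j x_c v(2) by auto
  then consider "Suc j = ?k" | "Suc (Suc j) \<le> ?k" using j by linarith
  then show False
  proof cases
    case 1
    have c: "v (Suc j) = ?c" using 1 v(2) by simp
    have "\<not> E y (v j)"
      using depth_nearest_le[OF in_A, of j y] depths[of j] j 1 by auto
    moreover have "E (v j) ?c" using edges[of j] 1 c by simp
    moreover have "v j \<noteq> ?c" using depths[of j] 1 by auto
    ultimately have "induced_P4 E x (v j) ?c y"
      unfolding induced_P4_def
      using j adj_nearest[OF y] x_c xy in_A[OF j(1)] nearest_in_A[OF y] \<open>x \<notin> A\<close> \<open>y \<notin> A\<close>
      by (auto dest: adj_sym)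
    then show False
      using not_lucky nearest_in_A[OF y] in_A[OF j(1)] unfolding lucky_pair_def by blast
  next
    case 2
    let ?p = "v (Suc j)" and ?q = "v (Suc (Suc j))"
    have A3: "v j \<in> A" "?p \<in> A" "?q \<in> A" using in_A 2 by auto
    have D3: "depth (v j) = j" "depth ?p = Suc j" "depth ?q = Suc (Suc j)" using depths 2 by auto
    have "\<not> E x ?p" "\<not> E x ?q"
      using j_max[of "Suc j"] j_max[of "Suc (Suc j)"] 2 by auto
    moreover have "\<not> E (v j) ?q"
      using not_adj_if_depth_gap[OF A3(1,3)] D3 by simp
    moreover have "E (v j) ?p" "E ?p ?q" using edges 2 by auto
    moreover have "v j \<noteq> ?p" "v j \<noteq> ?q" "?p \<noteq> ?q" using D3 by auto
    ultimately have "induced_P4 E x (v j) ?p ?q"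
      unfolding induced_P4_def using j(2) A3 \<open>x \<notin> A\<close> by auto
    then show False
      using not_lucky lucky_vertexI[OF A3] unfolding lucky_pair_def by blast
  qed
qed

lemma not_lucky_pair_cases:
  assumes x: "x \<in> S" and y: "y \<in> S" and not_lucky: "\<not> lucky_pair E A x y"
  shows "E u x \<or> E x y \<or> E (nearest x) y \<or> E (nearest y) x"
proof (rule ccontr)
  let ?a = "nearest x" and ?c = "nearest y"
  assume "\<not> ?thesis"
  then have xu: "\<not> E x u" and xy: "\<not> E x y" and ay: "\<not> E ?a y" and xc: "\<not> E x ?c"
    by (auto dest: adj_sym)
  have x_not_lucky: "\<not> lucky_vertex E A x"
    using not_lucky unfolding lucky_pair_def by blast
  have "x \<notin> A" "y \<notin> A" using x y A_subset by auto
  obtain v where v: "geodesic v (depth ?c)" "v (depth ?c) = ?c"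
    using geodesic_to[OF nearest_in_A[OF y]] .
  have "E ?a (v (depth ?c))"
  proof (rule adj_propagates[OF x_not_lucky \<open>x \<notin> A\<close> nearest_in_A[OF x] adj_nearest[OF x]])
    show "E ?a (v 0)"
      using root_adj_nearest[OF x x_not_lucky xu] v(1) unfolding geodesic_def by (auto dest: adj_sym)
    show "\<And>i. i < depth ?c \<Longrightarrow> E (v i) (v (Suc i))" "\<And>i. i \<le> depth ?c \<Longrightarrow> v i \<in> A"
      using v(1) unfolding geodesic_def by auto
    show "\<And>i. i \<le> depth ?c \<Longrightarrow> \<not> E x (v i)"
      using not_adj_geodesic_to_nearest[OF x y not_lucky xy xc v] .
  qed
  then have "E ?a ?c" using v(2) by simp
  then have "induced_P4 E x ?a ?c y"
    unfolding induced_P4_def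
    using adj_nearest[OF x] adj_nearest[OF y] nearest_in_A[OF x] nearest_in_A[OF y]
      xy ay xc \<open>x \<notin> A\<close> \<open>y \<notin> A\<close> adj_irrefl
    by (auto dest: adj_sym)
  then show False
    using not_lucky nearest_in_A[OF x] nearest_in_A[OF y] unfolding lucky_pair_def by blast
qed

lemma not_lucky_pair_prob_le:
  assumes w: "prob_weights S w" and nbhd: "\<forall>v \<in> V. sum w (nbhd V E v \<inter> S) \<le> \<alpha>"
  shows "pair_prob S w (\<lambda>x y. \<not> lucky_pair E A x y) \<le> 4 * \<alpha>"
proof -
  have sections: "sum w {y \<in> S. E v y} \<le> \<alpha>" if "v \<in> V" for v
  proof -
    have "{y \<in> S. E v y} = nbhd V E v \<inter> S"
      unfolding nbhd_def by (auto dest: adj_sym adj_in_V)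
    then show ?thesis using nbhd that by simp
  qed
  have in_V: "x \<in> V" "nearest x \<in> V" if "x \<in> S" for x
    using adj_in_V[OF adj_nearest[OF that]] nearest_in_A[OF that] A_subset by auto
  have root_event: "pair_prob S w (\<lambda>x y. E u x) \<le> \<alpha>"
  proof -
    have "pair_prob S w (\<lambda>x y. E u x) = pair_prob S w (\<lambda>x y. E u y)" by (rule pair_prob_swap)
    also have "\<dots> \<le> \<alpha>"
      by (rule pair_prob_le_if_sections_le[OF w]) (use sections root in simp)
    finally show ?thesis .
  qed
  have adj_event: "pair_prob S w (\<lambda>x y. E x y) \<le> \<alpha>"
    by (rule pair_prob_le_if_sections_le[OF w]) (use sections in_V in simp)
  have nearest_event: "pair_prob S w (\<lambda>x y. E (nearest x) y) \<le> \<alpha>"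
    by (rule pair_prob_le_if_sections_le[OF w]) (use sections in_V in simp)
  have nearest_event': "pair_prob S w (\<lambda>x y. E (nearest y) x) \<le> \<alpha>"
    using pair_prob_swap[of S w "\<lambda>x y. E (nearest x) y"] nearest_event by simp
  have "pair_prob S w (\<lambda>x y. \<not> lucky_pair E A x y)
      \<le> pair_prob S w (\<lambda>x y. E u x \<or> E x y \<or> E (nearest x) y \<or> E (nearest y) x)"
    by (rule pair_prob_mono[OF w]) (use not_lucky_pair_cases in blast)
  also have "\<dots> \<le> pair_prob S w (\<lambda>x y. E u x) + pair_prob S w (\<lambda>x y. E x y)
      + pair_prob S w (\<lambda>x y. E (nearest x) y) + pair_prob S w (\<lambda>x y. E (nearest y) x)"
    using pair_prob_disj_le[OF w, of "\<lambda>x y. E u x" "\<lambda>x y. E x y \<or> E (nearest x) y \<or> E (nearest y) x"]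
      pair_prob_disj_le[OF w, of "\<lambda>x y. E x y" "\<lambda>x y. E (nearest x) y \<or> E (nearest y) x"]
      pair_prob_disj_le[OF w, of "\<lambda>x y. E (nearest x) y" "\<lambda>x y. E (nearest y) x"]
    by linarith
  finally show ?thesis
    using root_event adj_event nearest_event nearest_event' by linarith
qed

end

lemma full_component_not_lucky_pair_prob_le:
  assumes "simple_graph V E" "full_component V E S C"
    and "prob_weights S w" "\<forall>v \<in> V. sum w (nbhd V E v \<inter> S) \<le> \<alpha>"
  shows "pair_prob S w (\<lambda>x y. \<not> lucky_pair E C x y) \<le> 4 * \<alpha>"
proof -
  obtain u where "u \<in> V - S" "C = {v. conn_in E (V - S) u v}" "\<forall>x \<in> S. \<exists>c \<in> C. E x c"
    using assms(2) unfolding full_component_def component_of_def by blast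
  then interpret rooted_full_component V E S C u
    using assms(1) by unfold_locales
  show ?thesis using not_lucky_pair_prob_le assms(3,4) by blast
qed

theorem lemma1:
  fixes V :: "'a set" and E :: "'a \<Rightarrow> 'a \<Rightarrow> bool" and S A B :: "'a set"
    and w :: "'a \<Rightarrow> real" and \<alpha> :: real
  assumes "simple_graph V E"
    and "minimal_separator V E S"
    and "prob_weights S w"
    and "\<alpha> < 1"
    and "\<forall>v \<in> V. sum w (nbhd V E v \<inter> S) < \<alpha>"
    and "full_component V E S A" and "full_component V E S B" and "A \<noteq> B"
  shows "(\<Sum>(x, y) \<in> {(x, y) \<in> S \<times> S. \<not> lucky_pair E A x y}. w x * w y) < 6 * \<alpha>
       \<and> (\<Sum>(x, y) \<in> {(x, y) \<in> S \<times> S. \<not> lucky_pair E B x y}. w x * w y) < 6 * \<alpha>"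
proof -
  have nbhd: "\<forall>v \<in> V. sum w (nbhd V E v \<inter> S) \<le> \<alpha>"
    using assms(5) by (auto intro: less_imp_le)
  obtain v where "v \<in> V"
    using assms(6) unfolding full_component_def component_of_def by blast
  moreover have "0 \<le> sum w (nbhd V E v \<inter> S)"
    using assms(3) unfolding prob_weights_def by (auto intro: sum_nonneg)
  ultimately have "0 < \<alpha>" using assms(5) by fastforce
  moreover have "pair_prob S w (\<lambda>x y. \<not> lucky_pair E C x y) \<le> 4 * \<alpha>"
    if "full_component V E S C" for C
    using full_component_not_lucky_pair_prob_le[OF assms(1) that assms(3) nbhd] .
  ultimately show ?thesis
    unfolding pair_prob_def using assms(6,7) by fastforce
qed

end
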